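(* Let $\delta_1=1/32$, $\delta_2=1/4$, and $$U=\{(x,y,0): 1-\delta_1<x\leq 1,\ -\delta_2<y<\delta_2\},\quad V=\{(x,y,0): -1\leq x<-1+\delta_1,\ -\delta_2<y<\delta_2\},$$ $$W=\{(x,y,z): -\delta_2<x<\delta_2,\ 1-\delta_1<y\leq 1,\ 0\leq z<\delta_2\}.$$ Let $A=(0,-1,0)$, let $S^1=\{(x,y,0):x^2+y^2=1\}$ and $S^2_{\geq 0}=\{(x,y,z):x^2+y^2+z^2=1,\ z\geq 0\}$. Then for any $B\in U\cap S^1$, $C\in V\cap S^1$, $D\in W\cap S^2_{\geq 0}$, $$AB+BC+CA+DA+DB+DC\leq 4+4\sqrt{2},$$ where $PQ$ denotes the Euclidean distance between $P$ and $Q$. *)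

theory Defs
  imports "HOL-Analysis.Analysis"
begin

definition \<delta>1 :: real where "\<delta>1 = 1/32"
definition \<delta>2 :: real where "\<delta>2 = 1/4"

definition pt :: "real \<Rightarrow> real \<Rightarrow> real \<Rightarrow> real^3" where
  "pt x y z = vector [x, y, z]"

definition U_set :: "(real^3) set" where
  "U_set = {pt x y 0 | x y. 1 - \<delta>1 < x \<and> x \<le> 1 \<and> -\<delta>2 < y \<and> y < \<delta>2}"

definition V_set :: "(real^3) set" where
  "V_set = {pt x y 0 | x y. -1 \<le> x \<and> x < -1 + \<delta>1 \<and> -\<delta>2 < y \<and> y < \<delta>2}"

definition W_set :: "(real^3) set" where
  "W_set = {pt x y z | x y z. -\<delta>2 < x \<and> x < \<delta>2 \<and> 1 - \<delta>1 < y \<and> y \<le> 1 \<and> 0 \<le> z \<and> z < \<delta>2}"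

definition S1 :: "(real^3) set" where
  "S1 = {pt x y 0 | x y. x^2 + y^2 = 1}"

definition S2_upper :: "(real^3) set" where
  "S2_upper = {pt x y z | x y z. x^2 + y^2 + z^2 = 1 \<and> z \<ge> 0}"

definition A_pt :: "real^3" where "A_pt = pt 0 (-1) 0"

end

theory Submission imports Defs begin

(* All four points lie on the unit sphere, so |PQ|^2 = 2 - 2 P.Q. Bounding each distance by
   the tangent line of sqrt at the value it has in the extremal configuration (sqrt 2 for
   AB, CA, DB, DC and 2 for BC, DA) makes the bound linear in the inner products. What
   remains is a polynomial inequality in the coordinates; it holds by completing squares,
   because B, C are nearly antipodal (|b1 + c1| <= |b2 + c2|/2) and D is close to the
   pole (d1^2 <= 2 (1 - d2)). *)

lemma sqrt_le_tangent_line: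
  fixes x a :: real
  assumes "0 \<le> x" and "0 < a"
  shows "sqrt x \<le> (x + a\<^sup>2) / (2 * a)"
proof -
  have "0 \<le> (sqrt x - a)\<^sup>2" by simp
  also have "\<dots> = x - 2 * a * sqrt x + a\<^sup>2"
    using assms by (simp add: power2_eq_square algebra_simps)
  finally show ?thesis using assms by (simp add: field_simps)
qed

lemma dist_le_tangent_line_unit:
  fixes x y :: "'a::real_inner"
  assumes "norm x = 1" and "norm y = 1" and "0 < a"
  shows "dist x y \<le> (2 - 2 * inner x y + a\<^sup>2) / (2 * a)"
proof -
  have "inner x x = 1" "inner y y = 1"
    using assms(1,2) by (simp_all add: norm_eq_1)
  then have sq: "(dist x y)\<^sup>2 = 2 - 2 * inner x y"
    by (simp add: dist_norm power2_norm_eq_inner inner_diff inner_commute)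
  have "dist x y = sqrt (2 - 2 * inner x y)"
    unfolding sq[symmetric] by simp
  also have "\<dots> \<le> (2 - 2 * inner x y + a\<^sup>2) / (2 * a)"
    using sqrt_le_tangent_line[OF _ assms(3)] sq by (metis zero_le_power2)
  finally show ?thesis .
qed

lemma dist_unit_le_tangent_at_sqrt2:
  fixes x y :: "'a::real_inner"
  assumes "norm x = 1" and "norm y = 1"
  shows "2 * dist x y \<le> sqrt 2 * (2 - inner x y)"
proof -
  have "(2 - 2 * inner x y + (sqrt 2)\<^sup>2) / (2 * sqrt 2) = sqrt 2 * (2 - inner x y) / 2"
    by (simp add: field_simps)
  moreover have "0 < sqrt (2::real)" by simp
  ultimately show ?thesis
    using dist_le_tangent_line_unit[OF assms, of "sqrt 2"] by linarith
qed

lemma dist_unit_le_tangent_at_2: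
  fixes x y :: "'a::real_inner"
  assumes "norm x = 1" and "norm y = 1"
  shows "2 * dist x y \<le> 3 - inner x y"
  using dist_le_tangent_line_unit[OF assms, of 2] by (simp add: field_simps)

lemma abs_add_le_on_unit_circle:
  fixes b1 b2 c1 c2 k :: real
  assumes "b1\<^sup>2 + b2\<^sup>2 = 1" and "c1\<^sup>2 + c2\<^sup>2 = 1"
    and "c1 < b1" and "k * \<bar>b2 - c2\<bar> \<le> b1 - c1" and "0 \<le> k"
  shows "k * \<bar>b1 + c1\<bar> \<le> \<bar>b2 + c2\<bar>"
proof -
  have "(b1 + c1) * (b1 - c1) = (b2 + c2) * (c2 - b2)"
    using assms(1,2) by (simp add: algebra_simps power2_eq_square)
  then have "\<bar>b1 + c1\<bar> * (b1 - c1) = \<bar>b2 + c2\<bar> * \<bar>b2 - c2\<bar>"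
    using assms(3) by (metis abs_minus_commute abs_mult abs_of_pos diff_gt_0_iff_gt)
  then have "(k * \<bar>b1 + c1\<bar>) * (b1 - c1) = \<bar>b2 + c2\<bar> * (k * \<bar>b2 - c2\<bar>)"
    by (simp add: algebra_simps)
  also have "\<dots> \<le> \<bar>b2 + c2\<bar> * (b1 - c1)"
    using assms(4) by (simp add: mult_left_mono)
  finally show ?thesis
    using assms(3) by simp
qed

lemma configuration_polynomial_nonneg:
  fixes b1 b2 c1 c2 d1 d2 :: real
  assumes "b1\<^sup>2 + b2\<^sup>2 = 1" and "c1\<^sup>2 + c2\<^sup>2 = 1" and "d1\<^sup>2 + d2\<^sup>2 \<le> 1"
    and "31/32 < b1" and "c1 < -31/32" and "\<bar>b2\<bar> < 1/4" and "\<bar>c2\<bar> < 1/4"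
    and "31/32 < d2"
  shows "0 \<le> 2 + (b1 * c1 + b2 * c2 - d2)
              + sqrt 2 * (- b2 - c2 + d1 * (b1 + c1) + d2 * (b2 + c2))"
proof -
  define u v e r where "u = b1 + c1" and "v = b2 + c2" and "e = 1 - d2" and "r = sqrt (2::real)"
  have r: "r\<^sup>2 = 2" unfolding r_def by simp
  have "\<bar>b2 - c2\<bar> < 1/2"
    using assms(6,7) abs_triangle_ineq4[of b2 c2] by linarith
  then have "2 * \<bar>b2 - c2\<bar> \<le> b1 - c1"
    using assms(4,5) by simp
  then have "2 * \<bar>u\<bar> \<le> \<bar>v\<bar>"
    using abs_add_le_on_unit_circle[OF assms(1,2)] assms(4,5) unfolding u_def v_def by simp
  then have "(2 * \<bar>u\<bar>)\<^sup>2 \<le> v\<^sup>2"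
    by (metis abs_ge_zero power2_abs power_mono mult_nonneg_nonneg zero_le_numeral)
  then have u: "u\<^sup>2 \<le> v\<^sup>2 / 4"
    by (simp add: power_mult_distrib)
  have "d2\<^sup>2 \<le> 1"
    using assms(3) zero_le_power2[of d1] by linarith
  then have e: "0 \<le> e" "e \<le> 1/32"
    using assms(8) unfolding e_def by (simp_all add: abs_square_le_1)
  have "d1\<^sup>2 \<le> (1 - d2) * (1 + d2)"
    using assms(3) by (simp add: algebra_simps power2_eq_square)
  also have "\<dots> \<le> (1 - d2) * 2"
    using e \<open>d2\<^sup>2 \<le> 1\<close> unfolding e_def by (intro mult_left_mono) (auto simp: abs_square_le_1)
  also have "\<dots> = 2 * e"
    unfolding e_def by simp
  finally have d1: "d1\<^sup>2 \<le> 2 * e" .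
  have "0 \<le> (v / 2 - r * e)\<^sup>2" by simp
  then have v: "- 2 * e\<^sup>2 \<le> v\<^sup>2 / 4 - r * e * v"
    using r by (simp add: power2_eq_square algebra_simps)
  have "e * (32 * e) \<le> e * 1"
    using e by (intro mult_left_mono) auto
  then have "2 * e\<^sup>2 \<le> e / 16"
    by (simp add: power2_eq_square)
  \<comment> \<open>the quadratic form has discriminant 2 - 4 * 3/2 * 15/32 < 0\<close>
  have "0 \<le> 3/2 * (u + r * d1 / 3)\<^sup>2 + d1\<^sup>2 * (15/32 - 1/3)" by simp
  then have quad: "0 \<le> 3/2 * u\<^sup>2 + r * d1 * u + 15/32 * d1\<^sup>2"
    using r by (simp add: power2_eq_square algebra_simps)
  have "0 \<le> u\<^sup>2 / 2 + v\<^sup>2 / 2 + e + r * d1 * u - r * e * v"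
    using u d1 v quad \<open>2 * e\<^sup>2 \<le> e / 16\<close> by linarith
  also have "\<dots> = 2 + (b1 * c1 + b2 * c2 - d2) + r * (- b2 - c2 + d1 * (b1 + c1) + d2 * (b2 + c2))"
  proof -
    have "u\<^sup>2 + v\<^sup>2 = (b1\<^sup>2 + b2\<^sup>2) + (c1\<^sup>2 + c2\<^sup>2) + 2 * (b1 * c1 + b2 * c2)"
      unfolding u_def v_def by (simp add: power2_eq_square algebra_simps)
    then have "u\<^sup>2 / 2 + v\<^sup>2 / 2 = 1 + (b1 * c1 + b2 * c2)"
      using assms(1,2) by simp
    then show ?thesis
      unfolding u_def v_def e_def by (simp add: algebra_simps)
  qed
  finally show ?thesis
    unfolding r_def .
qed

lemma pt_eq_iff: "pt a b c = pt x y z \<longleftrightarrow> a = x \<and> b = y \<and> c = z"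
  unfolding pt_def by (simp add: vec_eq_iff forall_3 vector_3)

lemma inner_pt: "inner (pt a b c) (pt x y z) = a * x + b * y + c * z"
  unfolding pt_def by (simp add: inner_vec_def sum_3 vector_3)

lemma norm_pt_eq_1_iff: "norm (pt x y z) = 1 \<longleftrightarrow> x\<^sup>2 + y\<^sup>2 + z\<^sup>2 = 1"
  by (simp add: norm_eq_1 inner_pt power2_eq_square)

lemma U_S1E:
  assumes "B \<in> U_set \<inter> S1"
  obtains b1 b2 where "B = pt b1 b2 0" "b1\<^sup>2 + b2\<^sup>2 = 1" "31/32 < b1" "\<bar>b2\<bar> < 1/4"
  using assms unfolding U_set_def S1_def \<delta>1_def \<delta>2_def by (auto simp: pt_eq_iff)

lemma V_S1E:
  assumes "C \<in> V_set \<inter> S1"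
  obtains c1 c2 where "C = pt c1 c2 0" "c1\<^sup>2 + c2\<^sup>2 = 1" "c1 < -31/32" "\<bar>c2\<bar> < 1/4"
  using assms unfolding V_set_def S1_def \<delta>1_def \<delta>2_def by (auto simp: pt_eq_iff)

lemma W_S2_upperE:
  assumes "D \<in> W_set \<inter> S2_upper"
  obtains d1 d2 d3 where "D = pt d1 d2 d3" "d1\<^sup>2 + d2\<^sup>2 + d3\<^sup>2 = 1" "31/32 < d2"
  using assms unfolding W_set_def S2_upper_def \<delta>1_def by (auto simp: pt_eq_iff)

theorem theorem2:
  fixes B C D :: "real^3"
  assumes "B \<in> U_set \<inter> S1" and "C \<in> V_set \<inter> S1" and "D \<in> W_set \<inter> S2_upper"
  shows "dist A_pt B + dist B C + dist C A_pt + dist D A_pt + dist D B + dist D C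
           \<le> 4 + 4 * sqrt 2"
proof -
  obtain b1 b2 where B: "B = pt b1 b2 0" "b1\<^sup>2 + b2\<^sup>2 = 1" "31/32 < b1" "\<bar>b2\<bar> < 1/4"
    using U_S1E[OF assms(1)] .
  obtain c1 c2 where C: "C = pt c1 c2 0" "c1\<^sup>2 + c2\<^sup>2 = 1" "c1 < -31/32" "\<bar>c2\<bar> < 1/4"
    using V_S1E[OF assms(2)] .
  obtain d1 d2 d3 where D: "D = pt d1 d2 d3" "d1\<^sup>2 + d2\<^sup>2 + d3\<^sup>2 = 1" "31/32 < d2"
    using W_S2_upperE[OF assms(3)] .
  have unit: "norm A_pt = 1" "norm B = 1" "norm C = 1" "norm D = 1"
    using B C D by (simp_all add: A_pt_def norm_pt_eq_1_iff)
  have "2 * (dist A_pt B + dist B C + dist C A_pt + dist D A_pt + dist D B + dist D C)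
      \<le> sqrt 2 * (8 - (inner A_pt B + inner C A_pt + inner D B + inner D C))
         + (6 - (inner B C + inner D A_pt))"
    using dist_unit_le_tangent_at_sqrt2[OF unit(1,2)] dist_unit_le_tangent_at_sqrt2[OF unit(3,1)]
      dist_unit_le_tangent_at_sqrt2[OF unit(4,2)] dist_unit_le_tangent_at_sqrt2[OF unit(4,3)]
      dist_unit_le_tangent_at_2[OF unit(2,3)] dist_unit_le_tangent_at_2[OF unit(4,1)]
    by (simp add: algebra_simps)
  also have "\<dots> \<le> 2 * (4 + 4 * sqrt 2)"
  proof -
    have "d1\<^sup>2 + d2\<^sup>2 \<le> 1"
      using D(2) by (metis le_add_same_cancel1 zero_le_power2)
    from configuration_polynomial_nonneg[OF B(2) C(2) this B(3) C(3) B(4) C(4) D(3)]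
    show ?thesis
      unfolding A_pt_def B(1) C(1) D(1) inner_pt by (simp add: algebra_simps)
  qed
  finally show ?thesis by simp
qed

end
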